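(* Let $\mathbf u$ be the infinite word over $\{0,1,2,3\}$ that is the fixed point starting with $0$ of the morphism $\varphi$ given by $\varphi(0)=0130$, $\varphi(1)=1021$, $\varphi(2)=102$, $\varphi(3)=013$. Let $\theta_1,\theta_2$ be the antimorphisms on $\{0,1,2,3\}^*$ defined on letters by $\theta_1: 0\mapsto 1, 1\mapsto 0, 2\mapsto 2, 3\mapsto 3$ and $\theta_2: 0\mapsto 0, 1\mapsto 1, 2\mapsto 3, 3\mapsto 2$. Then every nonempty bispecial factor $w$ of $\mathbf u$ satisfies $\theta_i(w)=w$ for some $i\in\{1,2\}$.
   Context: The fixed point starting with $0$ is the unique infinite word having $\varphi^n(0)$ as a prefix for every $n$. An antimorphism $\theta$ satisfies $\theta(vw)=\theta(w)\theta(v)$. A factor $w$ of $\mathbf u$ is right special if $wa,wb$ are factors of $\mathbf u$ for two distinct letters $a,b$, left special if $aw,bw$ are factors for two distinct letters $a,b$, and bispecial if it is both. *)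

theory Defs
  imports Main
begin

text \<open>Letters of the alphabet {0,1,2,3} are represented by natural numbers;
finite words are lists, infinite words are functions nat => nat.\<close>

fun phi_letter :: "nat \<Rightarrow> nat list" where
  "phi_letter a = (if a = 0 then [0,1,3,0] else if a = 1 then [1,0,2,1]
                   else if a = 2 then [1,0,2] else [0,1,3])"

definition phi :: "nat list \<Rightarrow> nat list" where
  "phi w = concat (map phi_letter w)"

definition prefix_of_inf :: "nat list \<Rightarrow> (nat \<Rightarrow> nat) \<Rightarrow> bool" where
  "prefix_of_inf v x \<longleftrightarrow> (\<forall>i < length v. v ! i = x i)"

definition is_fixed_point_0 :: "(nat \<Rightarrow> nat) \<Rightarrow> bool" where
  "is_fixed_point_0 x \<longleftrightarrow> (\<forall>n. prefix_of_inf ((phi ^^ n) [0]) x)"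

definition factor :: "nat list \<Rightarrow> (nat \<Rightarrow> nat) \<Rightarrow> bool" where
  "factor w x \<longleftrightarrow> (\<exists>i. w = map x [i..<i + length w])"

definition right_special :: "nat list \<Rightarrow> (nat \<Rightarrow> nat) \<Rightarrow> bool" where
  "right_special w x \<longleftrightarrow> (\<exists>a b. a \<noteq> b \<and> factor (w @ [a]) x \<and> factor (w @ [b]) x)"

definition left_special :: "nat list \<Rightarrow> (nat \<Rightarrow> nat) \<Rightarrow> bool" where
  "left_special w x \<longleftrightarrow> (\<exists>a b. a \<noteq> b \<and> factor (a # w) x \<and> factor (b # w) x)"

definition bispecial :: "nat list \<Rightarrow> (nat \<Rightarrow> nat) \<Rightarrow> bool" where
  "bispecial w x \<longleftrightarrow> right_special w x \<and> left_special w x"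

definition antimorph :: "(nat \<Rightarrow> nat) \<Rightarrow> nat list \<Rightarrow> nat list" where
  "antimorph f w = rev (map f w)"

definition theta1_letter :: "nat \<Rightarrow> nat" where
  "theta1_letter a = (if a = 0 then 1 else if a = 1 then 0 else a)"

definition theta2_letter :: "nat \<Rightarrow> nat" where
  "theta2_letter a = (if a = 2 then 3 else if a = 3 then 2 else a)"

definition theta1 :: "nat list \<Rightarrow> nat list" where
  "theta1 = antimorph theta1_letter"

definition theta2 :: "nat list \<Rightarrow> nat list" where
  "theta2 = antimorph theta2_letter"

end

theory Submission
  imports Defs "HOL-Library.Sublist"
begin

text \<open>Every factor of length at most 6 of the fixed point occurs in an explicit table; this is
  certified by a computation, since a short factor of \<open>\<phi>(y)\<close> already lies in the image of a
  factor of \<open>y\<close> of length at most 3. Bispecial factors of length at most 4 are then checked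
  directly. A longer bispecial factor \<open>w\<close> has two left extensions, which force its third letter
  to be 2 or 3 and hence a cut between letter images, and two right extensions, which force its
  last five letters to be 01301 or 10210. Desubstitution gives \<open>w = \<phi>(v) t(c)\<close> with \<open>v\<close> a shorter
  bispecial factor and \<open>vc\<close> a factor. As \<open>t(l) \<psi>(l) = \<phi>(l) t(c)\<close> for every factor \<open>lc\<close>, the
  word \<open>t\<close> conjugates \<open>\<phi>\<close> to a morphism \<open>\<psi>\<close> (\<open>t = right_tail\<close>, \<open>\<psi> = psi_letter\<close>) with
  \<open>\<theta>\<^sub>i \<circ> \<phi> \<circ> \<theta>\<^sub>i = \<psi>\<close> on letters, so \<open>\<theta>\<^sub>i(v) = v\<close> implies \<open>\<theta>\<^sub>i(w) = w\<close>, and induction on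
  the length concludes.\<close>

declare phi_letter.simps [simp del]

lemma phi_Nil [simp]: "phi [] = []"
  by (simp add: phi_def)

lemma phi_Cons [simp]: "phi (a # w) = phi_letter a @ phi w"
  by (simp add: phi_def)

lemma phi_append [simp]: "phi (v @ w) = phi v @ phi w"
  by (simp add: phi_def)

lemma phi_letter_0 [simp]: "phi_letter 0 = [0,1,3,0]"
  and phi_letter_1 [simp]: "phi_letter 1 = [1,0,2,1]" "phi_letter (Suc 0) = [1,0,2,1]"
  and phi_letter_2 [simp]: "phi_letter 2 = [1,0,2]"
  and phi_letter_ge_3 [simp]: "3 \<le> a \<Longrightarrow> phi_letter a = [0,1,3]"
  by (simp_all add: phi_letter.simps)

lemma phi_letter_cases:
  "phi_letter a = [0,1,3,0] \<or> phi_letter a = [1,0,2,1] \<or> phi_letter a = [1,0,2] \<or> phi_letter a = [0,1,3]"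
  by (simp add: phi_letter.simps)

lemma letter_cases: "(a::nat) \<le> 3 \<Longrightarrow> a = 0 \<or> a = 1 \<or> a = 2 \<or> a = 3"
  by auto

lemma length_phi_letter_ge: "3 \<le> length (phi_letter a)"
  using phi_letter_cases[of a] by auto

lemma length_phi_ge: "3 * length w \<le> length (phi w)"
proof (induction w)
  case (Cons a w) then show ?case using length_phi_letter_ge[of a] by simp
qed simp

lemma last_phi_letter: "a \<le> 3 \<Longrightarrow> last (phi_letter a) = a"
  using letter_cases[of a] by auto

lemma phi_cases: "v = [] \<or> (\<exists>r. phi v = 0 # 1 # 3 # r \<or> phi v = 1 # 0 # 2 # r)"
proof (cases v)
  case (Cons a t) then show ?thesis using phi_letter_cases[of a] by auto
qed simp

lemma phi_letter_sync:
  assumes "a \<le> 3" "b \<le> 3" "phi_letter a @ phi v = phi_letter b @ phi v'"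
  shows "a = b"
  using phi_cases[of v] phi_cases[of v'] letter_cases[OF assms(1)] letter_cases[OF assms(2)] assms(3)
  by (elim disjE exE) simp_all

lemma phi_inj:
  "\<forall>a\<in>set v. a \<le> 3 \<Longrightarrow> \<forall>a\<in>set v'. a \<le> 3 \<Longrightarrow> phi v = phi v' \<Longrightarrow> v = v'"
proof (induction v arbitrary: v')
  case Nil
  then show ?case using phi_cases[of v'] by auto
next
  case (Cons a v)
  obtain b v'' where v': "v' = b # v''"
    using Cons.prems(3) length_phi_letter_ge[of a] by (cases v') auto
  have "a = b" using Cons.prems v' phi_letter_sync[of a b v v''] by simp
  moreover have "v = v''" using Cons.IH[of v''] Cons.prems v' \<open>a = b\<close> by simp
  ultimately show ?case using v' by simp
qed

text \<open>Two places after a position inside a letter image there is a 0 or a 1, so a 2 or 3 there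
  marks a cut between letter images.\<close>
lemma phi_split:
  "phi y = P @ Q \<Longrightarrow> 3 \<le> length Q \<Longrightarrow> Q ! 2 = 2 \<or> Q ! 2 = 3
   \<Longrightarrow> \<exists>y1 y2. y = y1 @ y2 \<and> phi y1 = P \<and> phi y2 = Q"
proof (induction y arbitrary: P)
  case Nil then show ?case by simp
next
  case (Cons x y)
  show ?case
  proof (cases "P = []")
    case True then show ?thesis using Cons.prems(1) by (intro exI[of _ "[]"] exI[of _ "x # y"]) simp
  next
    case P_ne: False
    from Cons.prems(1) obtain us where
      "(phi_letter x = P @ us \<and> us @ phi y = Q) \<or> (phi_letter x @ us = P \<and> phi y = us @ Q)"
      by (auto simp: append_eq_append_conv2)
    then show ?thesis
    proof (elim disjE conjE)
      assume x: "phi_letter x @ us = P" and y: "phi y = us @ Q"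
      from Cons.IH[OF y Cons.prems(2,3)] obtain y1 y2 where "y = y1 @ y2" "phi y1 = us" "phi y2 = Q"
        by blast
      then show ?thesis using x by (intro exI[of _ "x # y1"] exI[of _ y2]) simp
    next
      assume x: "phi_letter x = P @ us" and y: "us @ phi y = Q"
      show ?thesis
      proof (cases "us = []")
        case True
        then show ?thesis using x y by (intro exI[of _ "[x]"] exI[of _ y]) simp
      next
        case us_ne: False
        have us: "us = [3,0] \<or> us = [1,3,0] \<or> us = [0] \<or> us = [0,2,1] \<or> us = [2,1] \<or> us = [1]
               \<or> us = [0,2] \<or> us = [2] \<or> us = [1,3] \<or> us = [3]"
          using phi_letter_cases[of x] x P_ne us_ne
          by (auto simp: Cons_eq_append_conv append_eq_Cons_conv)
        then have "y \<noteq> []" using y Cons.prems(2,3) by (elim disjE) auto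
        then obtain r where "phi y = 0 # 1 # 3 # r \<or> phi y = 1 # 0 # 2 # r"
          using phi_cases[of y] by blast
        then have False using us y Cons.prems(3) by (elim disjE) auto
        then show ?thesis ..
      qed
    qed
  qed
qed

definition lang :: "nat list \<Rightarrow> bool" where
  "lang w \<longleftrightarrow> (\<exists>n. sublist w ((phi ^^ n) [0]))"

lemma lang_sublist: "lang w \<Longrightarrow> sublist x w \<Longrightarrow> lang x"
  unfolding lang_def using sublist_order.order.trans by blast

lemma prefix_phi_iterate: "prefix ((phi ^^ n) [0]) ((phi ^^ Suc n) [0])"
proof (induction n)
  case (Suc n)
  then show ?case by (auto simp: prefix_def)
qed (simp add: prefix_def)

lemma lang_desubstitute: "lang x \<Longrightarrow> \<exists>y. lang y \<and> sublist x (phi y)"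
proof -
  assume "lang x"
  then obtain n where "sublist x ((phi ^^ n) [0])" unfolding lang_def by blast
  then have "sublist x (phi ((phi ^^ n) [0]))"
    using prefix_imp_sublist[OF prefix_phi_iterate[of n]] sublist_order.order.trans by auto
  moreover have "lang ((phi ^^ n) [0])" unfolding lang_def by blast
  ultimately show ?thesis by blast
qed

lemma length_phi_iterate: "Suc n \<le> length ((phi ^^ n) [0])"
proof (induction n)
  case (Suc n)
  then show ?case using length_phi_ge[of "(phi ^^ n) [0]"] by simp
qed simp

lemma factor_imp_lang:
  assumes "is_fixed_point_0 u" and "factor x u"
  shows "lang x"
proof -
  from assms(2) obtain i where x: "x = map u [i..<i + length x]" unfolding factor_def by blast
  define z where "z = (phi ^^ (i + length x)) [0]"
  have z_long: "i + length x < length z" using length_phi_iterate unfolding z_def by (simp add: Suc_le_eq)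
  have z_u: "\<forall>k < length z. z ! k = u k"
    using assms(1) unfolding is_fixed_point_0_def prefix_of_inf_def z_def by blast
  have "x = take (length x) (drop i z)"
    by (rule nth_equalityI) (use z_long z_u in \<open>simp_all, subst x, simp\<close>)
  then have "sublist x z" by (metis sublist_take sublist_drop sublist_order.order.trans)
  then show "lang x" unfolding lang_def z_def by blast
qed

text \<open>Contains every factor of length \<open>n \<le> 6\<close> of the fixed point (\<open>lang_short_listed\<close>): it contains
  \<open>[0]\<close> and is closed under taking short factors of images.\<close>
definition short_factors :: "nat \<Rightarrow> nat list list" where
  "short_factors n = (if n = 0 then [[]]
    else if n = 1 then [[0], [1], [2], [3]]
    else if n = 2 then [[0,1], [0,2], [1,0], [1,3], [2,1], [3,0]]
    else if n = 3 then [[0,1,0], [0,1,3], [0,2,1], [1,0,1], [1,0,2], [1,3,0], [2,1,0], [3,0,1]]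
    else if n = 4 then [[0,1,0,2], [0,1,3,0], [0,2,1,0], [1,0,1,3], [1,0,2,1], [1,3,0,1], [2,1,0,1],
      [2,1,0,2], [3,0,1,0], [3,0,1,3]]
    else if n = 5 then [[0,1,0,2,1], [0,1,3,0,1], [0,2,1,0,1], [0,2,1,0,2], [1,0,1,3,0], [1,0,2,1,0],
      [1,3,0,1,0], [1,3,0,1,3], [2,1,0,1,3], [2,1,0,2,1], [3,0,1,0,2], [3,0,1,3,0]]
    else if n = 6 then [[0,1,0,2,1,0], [0,1,3,0,1,0], [0,1,3,0,1,3], [0,2,1,0,1,3], [0,2,1,0,2,1],
      [1,0,1,3,0,1], [1,0,2,1,0,1], [1,0,2,1,0,2], [1,3,0,1,0,2], [1,3,0,1,3,0], [2,1,0,1,3,0],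
      [2,1,0,2,1,0], [3,0,1,0,2,1], [3,0,1,3,0,1]]
    else [])"

definition listed :: "nat list \<Rightarrow> bool" where
  "listed x \<longleftrightarrow> x \<in> set (short_factors (length x))"

definition short_sublists :: "nat list \<Rightarrow> nat list list" where
  "short_sublists xs = [take k (drop i xs). i \<leftarrow> [0..<length xs], k \<leftarrow> [1..<7]]"

lemma sublist_in_short_sublists:
  assumes "sublist x xs" "x \<noteq> []" "length x \<le> 6"
  shows "x \<in> set (short_sublists xs)"
proof -
  from assms(1) obtain ps ss where xs: "xs = ps @ x @ ss" by (auto simp: sublist_def)
  then have "x = take (length x) (drop (length ps) xs)" and "length ps < length xs"
    using assms(2) by simp_all
  moreover have "length x \<in> {1..<7}" using assms(2,3) by (cases x) auto
  ultimately show ?thesis unfolding short_sublists_def by force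
qed

lemma short_factors_phi_closed:
  "\<forall>y\<in>set (short_factors 1 @ short_factors 2 @ short_factors 3). \<forall>x\<in>set (short_sublists (phi y)). listed x"
  by code_simp

lemma prefix_phi_take_2:
  assumes "prefix t (phi zs)" and "length t \<le> 6"
  shows "prefix t (phi (take 2 zs))"
proof (cases "2 \<le> length zs")
  case True
  have "6 \<le> length (phi (take 2 zs))" using length_phi_ge[of "take 2 zs"] True by simp
  moreover have "phi zs = phi (take 2 zs) @ phi (drop 2 zs)" by (metis append_take_drop_id phi_append)
  ultimately show ?thesis using assms
    by (metis le_trans prefix_append prefix_length_prefix prefix_order.refl)
qed (use assms in simp)

lemma sublist_phi_window:
  "sublist x (phi z) \<Longrightarrow> length x \<le> 6 \<Longrightarrow> \<exists>y. sublist y z \<and> length y \<le> 3 \<and> sublist x (phi y)"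
proof (induction z)
  case Nil then show ?case by (intro exI[of _ "[]"]) simp
next
  case (Cons a z)
  from Cons.prems(1) consider "sublist x (phi_letter a)" | "sublist x (phi z)"
    | x1 x2 where "x = x1 @ x2" "suffix x1 (phi_letter a)" "prefix x2 (phi z)"
    unfolding phi_Cons sublist_append by blast
  then show ?case
  proof cases
    case 1 then show ?thesis by (intro exI[of _ "[a]"]) (simp add: sublist_Cons_right)
  next
    case 2 then show ?thesis using Cons.IH Cons.prems(2) by (meson sublist_Cons_right)
  next
    case 3
    then have "prefix x2 (phi (take 2 z))" using prefix_phi_take_2 Cons.prems(2) by simp
    then obtain s where s: "phi (take 2 z) = x2 @ s" by (auto simp: prefix_def)
    obtain r where "phi_letter a = r @ x1" using 3(2) by (auto simp: suffix_def)
    then have "phi (a # take 2 z) = r @ x @ s" using s 3(1) by simp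
    then have "sublist x (phi (a # take 2 z))" by (metis sublist_appendI)
    moreover have "sublist (a # take 2 z) (a # z)"
      by (rule prefix_imp_sublist) (simp add: take_is_prefix)
    ultimately show ?thesis by (intro exI[of _ "a # take 2 z"]) simp
  qed
qed

lemma lang_short_listed: "lang x \<Longrightarrow> length x \<le> 6 \<Longrightarrow> listed x"
proof -
  have "sublist x ((phi ^^ n) [0]) \<Longrightarrow> length x \<le> 6 \<Longrightarrow> listed x" for n
  proof (induction n arbitrary: x)
    case 0
    then have "x = [] \<or> x = [0]" by (auto simp: sublist_Cons_right prefix_Cons)
    moreover have "listed []" "listed [0]" by (simp_all add: listed_def short_factors_def)
    ultimately show ?case by blast
  next
    case (Suc n)
    show ?case
    proof (cases "x = []")
      case True then show ?thesis by (simp add: listed_def short_factors_def)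
    next
      case False
      obtain y where y: "sublist y ((phi ^^ n) [0])" "length y \<le> 3" "sublist x (phi y)"
        using sublist_phi_window Suc.prems by auto
      have "y \<noteq> []" using y(3) False by auto
      have "listed y" using Suc.IH y(1,2) by simp
      moreover have "length y = 1 \<or> length y = 2 \<or> length y = 3"
        using y(2) \<open>y \<noteq> []\<close> length_greater_0_conv[of y] by presburger
      ultimately have "y \<in> set (short_factors 1 @ short_factors 2 @ short_factors 3)"
        unfolding listed_def by (elim disjE) simp_all
      moreover have "x \<in> set (short_sublists (phi y))"
        using sublist_in_short_sublists y(3) False Suc.prems(2) by blast
      ultimately show ?thesis using short_factors_phi_closed by blast
    qed
  qed
  then show "lang x \<Longrightarrow> length x \<le> 6 \<Longrightarrow> listed x" unfolding lang_def by blast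
qed

definition left_valence :: "nat list \<Rightarrow> nat" where
  "left_valence x = length (filter (\<lambda>a. listed (a # x)) [0..<4])"

definition right_valence :: "nat list \<Rightarrow> nat" where
  "right_valence x = length (filter (\<lambda>c. listed (x @ [c])) [0..<4])"

definition allowed_pair :: "nat \<Rightarrow> nat \<Rightarrow> bool" where
  "allowed_pair a b \<longleftrightarrow>
    (a = 0 \<and> (b = 1 \<or> b = 2)) \<or> (a = 1 \<and> (b = 0 \<or> b = 3)) \<or> (a = 2 \<and> b = 1) \<or> (a = 3 \<and> b = 0)"

lemma short_factors_1_letters: "\<forall>x\<in>set (short_factors 1). hd x \<le> 3"
  by code_simp

lemma short_factors_2_allowed: "\<forall>x\<in>set (short_factors 2). allowed_pair (x ! 0) (x ! 1)"
  by code_simp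

lemma short_factors_4_left_special:
  "\<forall>x\<in>set (short_factors 4). 2 \<le> left_valence x \<longrightarrow> x ! 2 = 2 \<or> x ! 2 = 3"
  by code_simp

lemma short_factors_5_right_special:
  "\<forall>x\<in>set (short_factors 5). 2 \<le> right_valence x \<longrightarrow> x = [0,1,3,0,1] \<or> x = [1,0,2,1,0]"
  by code_simp

lemma short_factors_bispecial_theta_fixed:
  "\<forall>x\<in>set (short_factors 1 @ short_factors 2 @ short_factors 3 @ short_factors 4).
     2 \<le> left_valence x \<longrightarrow> 2 \<le> right_valence x \<longrightarrow> theta1 x = x \<or> theta2 x = x"
  by code_simp

lemma two_le_length_filter_upt_4:
  assumes "a \<noteq> b" "a \<le> 3" "b \<le> 3" "P a" "P b"
  shows "2 \<le> length (filter P [0..<4])"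
proof -
  have "card {a, b} \<le> card (set (filter P [0..<4]))"
    using assms by (intro card_mono) auto
  also have "\<dots> = length (filter P [0..<4])" by (rule distinct_card) simp
  finally show ?thesis using assms(1) by simp
qed

lemma lang_in_short_factors: "lang x \<Longrightarrow> length x = n \<Longrightarrow> n \<le> 6 \<Longrightarrow> x \<in> set (short_factors n)"
  using lang_short_listed unfolding listed_def by blast

lemma lang_letter_le_3: "lang w \<Longrightarrow> a \<in> set w \<Longrightarrow> a \<le> 3"
proof -
  assume "lang w" "a \<in> set w"
  then have "lang [a]" by (metis lang_sublist split_list sublist_appendI append_Cons append_Nil)
  then have "[a] \<in> set (short_factors 1)" using lang_in_short_factors by simp
  then show "a \<le> 3" using short_factors_1_letters by fastforce
qed

lemma lang_successively_allowed: "lang w \<Longrightarrow> successively allowed_pair w"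
proof (induction w rule: induct_list012)
  case (3 a b r)
  have "lang [a, b]" by (rule lang_sublist[OF "3.prems"]) (simp add: prefix_imp_sublist)
  then have "[a, b] \<in> set (short_factors 2)" using lang_in_short_factors by simp
  then have "allowed_pair a b" using short_factors_2_allowed by fastforce
  moreover have "lang (b # r)" using lang_sublist[OF "3.prems", of "b # r"] by (simp add: sublist_Cons_right)
  ultimately show ?case using "3.IH"(2) by simp
qed simp_all

definition lang_bispecial :: "nat list \<Rightarrow> bool" where
  "lang_bispecial w \<longleftrightarrow>
    (\<exists>a b. a \<noteq> b \<and> lang (a # w) \<and> lang (b # w)) \<and> (\<exists>c d. c \<noteq> d \<and> lang (w @ [c]) \<and> lang (w @ [d]))"

lemma lang_bispecial_short:
  assumes "lang_bispecial w" "w \<noteq> []" "length w \<le> 4"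
  shows "theta1 w = w \<or> theta2 w = w"
proof -
  obtain a b c d where ab: "a \<noteq> b" "lang (a # w)" "lang (b # w)"
    and cd: "c \<noteq> d" "lang (w @ [c])" "lang (w @ [d])"
    using assms(1) unfolding lang_bispecial_def by blast
  have "a \<le> 3" "b \<le> 3" "c \<le> 3" "d \<le> 3" using lang_letter_le_3 ab cd by auto
  moreover have "listed (a # w)" "listed (b # w)" "listed (w @ [c])" "listed (w @ [d])"
    using lang_short_listed ab cd assms(3) by auto
  ultimately have "2 \<le> left_valence w" "2 \<le> right_valence w"
    unfolding left_valence_def right_valence_def using ab(1) cd(1)
    by (auto intro: two_le_length_filter_upt_4)
  moreover have "lang w" using lang_sublist[OF ab(2), of w] by (simp add: sublist_Cons_right)
  then have "w \<in> set (short_factors 1 @ short_factors 2 @ short_factors 3 @ short_factors 4)"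
    using lang_in_short_factors[of w] assms(2,3) length_greater_0_conv[of w]
    by (cases "length w") (auto simp: le_Suc_eq numeral_eq_Suc)
  ultimately show ?thesis using short_factors_bispecial_theta_fixed by blast
qed

lemma lang_left_special_sync:
  assumes "a \<noteq> b" "lang (a # w)" "lang (b # w)" "4 \<le> length w"
  shows "w ! 2 = 2 \<or> w ! 2 = 3"
proof -
  have "lang (a # take 4 w)" "lang (b # take 4 w)"
    using assms(2,3) by (auto intro: lang_sublist prefix_imp_sublist simp: take_is_prefix)
  then have "listed (a # take 4 w)" "listed (b # take 4 w)" "a \<le> 3" "b \<le> 3"
    using lang_short_listed lang_letter_le_3 assms(4) by auto
  then have "2 \<le> left_valence (take 4 w)"
    unfolding left_valence_def using assms(1) by (auto intro: two_le_length_filter_upt_4)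
  moreover have "lang (take 4 w)"
    using assms(2) by (auto intro: lang_sublist sublist_Cons_right[THEN iffD2] simp: take_is_prefix)
  then have "take 4 w \<in> set (short_factors 4)" using lang_in_short_factors assms(4) by simp
  ultimately show ?thesis using short_factors_4_left_special assms(4) by fastforce
qed

lemma lang_right_special_tail:
  assumes "c \<noteq> d" "lang (w @ [c])" "lang (w @ [d])" "5 \<le> length w"
  shows "drop (length w - 5) w = [0,1,3,0,1] \<or> drop (length w - 5) w = [1,0,2,1,0]"
proof -
  define T where "T = drop (length w - 5) w"
  have T_suffix: "suffix T w" unfolding T_def by (rule suffix_drop)
  then have "lang (T @ [c])" "lang (T @ [d])"
    using assms(2,3) by (auto intro: lang_sublist suffix_imp_sublist)
  moreover have "length T = 5" using assms(4) unfolding T_def by simp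
  ultimately have "listed (T @ [c])" "listed (T @ [d])" "c \<le> 3" "d \<le> 3"
    using lang_short_listed lang_letter_le_3 by auto
  then have "2 \<le> right_valence T"
    unfolding right_valence_def using assms(1) by (auto intro: two_le_length_filter_upt_4)
  moreover have "lang T"
    using assms(2) T_suffix by (auto intro: lang_sublist suffix_imp_sublist)
  then have "T \<in> set (short_factors 5)" using lang_in_short_factors \<open>length T = 5\<close> by simp
  ultimately show ?thesis using short_factors_5_right_special unfolding T_def by blast
qed

definition right_tail :: "nat \<Rightarrow> nat list" where
  "right_tail c = (if c = 1 \<or> c = 2 then [1,0,2,1,0] else [0,1,3,0,1])"

lemma lang_left_extension_desubstitute:
  assumes "lang (a # P @ T)" "T = [0,1,3,0,1] \<or> T = [1,0,2,1,0]"
    and sync: "(P @ T) ! 2 = 2 \<or> (P @ T) ! 2 = 3"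
  shows "\<exists>v. phi v = P \<and> lang (a # v)"
proof -
  obtain y where y: "lang y" "sublist (a # P @ T) (phi y)" using lang_desubstitute[OF assms(1)] by blast
  then obtain s p where "phi y = (s @ [a]) @ (P @ T @ p)" by (auto simp: sublist_def)
  moreover have "3 \<le> length (P @ T @ p)" "(P @ T @ p) ! 2 = 2 \<or> (P @ T @ p) ! 2 = 3"
    using sync assms(2) by (auto simp: nth_append)
  ultimately obtain y1 y2 where y12: "y = y1 @ y2" "phi y1 = s @ [a]" "phi y2 = P @ T @ p"
    using phi_split by blast
  moreover have "3 \<le> length (T @ p)" "(T @ p) ! 2 = 2 \<or> (T @ p) ! 2 = 3" using assms(2) by auto
  ultimately obtain v y3 where v: "y2 = v @ y3" "phi v = P" using phi_split[of y2 P "T @ p"] by auto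
  obtain y0 g where g: "y1 = y0 @ [g]" using y12(2) by (cases y1 rule: rev_cases) auto
  have "g \<le> 3" using lang_letter_le_3[OF y(1)] y12(1) g by simp
  moreover have "last (phi y0 @ phi_letter g) = a" using y12(2) g by simp
  then have "last (phi_letter g) = a" using length_phi_letter_ge[of g] by (auto simp: last_append)
  ultimately have "g = a" using last_phi_letter by simp
  then have "y = y0 @ (a # v) @ y3" using y12(1) v(1) g by simp
  then have "lang (a # v)" using lang_sublist[OF y(1)] by (metis sublist_appendI)
  then show ?thesis using v(2) by blast
qed

lemma phi_letter_prefix_right_tail:
  assumes "e \<le> 3" "phi_letter e @ phi y = T @ c # p" "T = [0,1,3,0,1] \<or> T = [1,0,2,1,0]"
  shows "e = c \<and> T = right_tail c"
proof -
  have "y \<noteq> []"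
  proof
    assume "y = []"
    then have "length (phi_letter e) = length T + 1 + length p" using assms(2) by simp
    then show False using phi_letter_cases[of e] assms(3) by auto
  qed
  then obtain r where r: "phi y = 0 # 1 # 3 # r \<or> phi y = 1 # 0 # 2 # r" using phi_cases[of y] by blast
  from letter_cases[OF assms(1)] consider "e = 0" | "e = 1" | "e = 2" | "e = 3" by blast
  then show ?thesis by cases (use assms(2,3) r in \<open>auto simp: right_tail_def\<close>)
qed

lemma lang_right_extension_desubstitute:
  assumes "lang (P @ T @ [c])" "T = [0,1,3,0,1] \<or> T = [1,0,2,1,0]"
    and sync: "(P @ T) ! 2 = 2 \<or> (P @ T) ! 2 = 3"
  shows "\<exists>v. phi v = P \<and> lang (v @ [c]) \<and> T = right_tail c"
proof -
  obtain y where y: "lang y" "sublist (P @ T @ [c]) (phi y)" using lang_desubstitute[OF assms(1)] by blast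
  then obtain s p where "phi y = s @ (P @ T @ c # p)" by (auto simp: sublist_def)
  moreover have "3 \<le> length (P @ T @ c # p)" "(P @ T @ c # p) ! 2 = 2 \<or> (P @ T @ c # p) ! 2 = 3"
    using sync assms(2) by (auto simp: nth_append)
  ultimately obtain y1 y2 where y12: "y = y1 @ y2" "phi y2 = P @ T @ c # p"
    using phi_split by blast
  moreover have "3 \<le> length (T @ c # p)" "(T @ c # p) ! 2 = 2 \<or> (T @ c # p) ! 2 = 3"
    using assms(2) by auto
  ultimately obtain v y3 where v: "y2 = v @ y3" "phi v = P" "phi y3 = T @ c # p"
    using phi_split[of y2 P "T @ c # p"] by auto
  then obtain e y4 where e: "y3 = e # y4" by (cases y3) auto
  have "e \<le> 3" using lang_letter_le_3[OF y(1)] y12(1) v(1) e by simp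
  moreover have "phi_letter e @ phi y4 = T @ c # p" using v(3) e by simp
  ultimately have "e = c \<and> T = right_tail c" using phi_letter_prefix_right_tail assms(2) by blast
  moreover have "y = y1 @ (v @ [e]) @ y4" using y12(1) v(1) e by simp
  then have "lang (v @ [e])" using lang_sublist[OF y(1)] by (metis sublist_appendI)
  ultimately show ?thesis using v(2) by blast
qed

lemma lang_bispecial_desubstitute:
  assumes "lang_bispecial w" "5 \<le> length w"
  shows "\<exists>v c. w = phi v @ right_tail c \<and> lang_bispecial v \<and> lang (v @ [c])"
proof -
  obtain a b c d where ab: "a \<noteq> b" "lang (a # w)" "lang (b # w)"
    and cd: "c \<noteq> d" "lang (w @ [c])" "lang (w @ [d])"
    using assms(1) unfolding lang_bispecial_def by blast
  define P where "P = take (length w - 5) w"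
  define T where "T = drop (length w - 5) w"
  have w: "w = P @ T" unfolding P_def T_def by simp
  have T: "T = [0,1,3,0,1] \<or> T = [1,0,2,1,0]"
    using lang_right_special_tail[OF cd] assms(2) unfolding T_def by simp
  have sync: "(P @ T) ! 2 = 2 \<or> (P @ T) ! 2 = 3"
    using lang_left_special_sync[OF ab] assms(2) w by simp
  obtain va where va: "phi va = P" "lang (a # va)"
    using lang_left_extension_desubstitute[OF _ T sync] ab(2) w by auto
  obtain vb where vb: "phi vb = P" "lang (b # vb)"
    using lang_left_extension_desubstitute[OF _ T sync] ab(3) w by auto
  obtain vc where vc: "phi vc = P" "lang (vc @ [c])" "T = right_tail c"
    using lang_right_extension_desubstitute[OF _ T sync] cd(2) w by auto
  obtain vd where vd: "phi vd = P" "lang (vd @ [d])"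
    using lang_right_extension_desubstitute[OF _ T sync] cd(3) w by auto
  have "\<forall>x\<in>set va. x \<le> 3" "\<forall>x\<in>set vb. x \<le> 3" "\<forall>x\<in>set vc. x \<le> 3" "\<forall>x\<in>set vd. x \<le> 3"
    using lang_letter_le_3 va(2) vb(2) vc(2) vd(2) by fastforce+
  then have "vb = va" "vc = va" "vd = va" using phi_inj va(1) vb(1) vc(1) vd(1) by metis+
  then have "lang_bispecial va"
    unfolding lang_bispecial_def using ab(1) cd(1) va(2) vb(2) vc(2) vd(2) by metis
  then show ?thesis using w va(1) vc(2,3) \<open>vc = va\<close> by blast
qed

definition psi_letter :: "nat \<Rightarrow> nat list" where
  "psi_letter x = (if x = 0 then [0,2,1,0] else if x = 1 then [1,3,0,1] else if x = 2 then [2,1,0] else [3,0,1])"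

lemma right_tail_conj_letter: "allowed_pair x n \<Longrightarrow> right_tail x @ psi_letter x = phi_letter x @ right_tail n"
  by (auto simp: allowed_pair_def right_tail_def psi_letter_def)

lemma right_tail_conj:
  "successively allowed_pair (v @ [c]) \<Longrightarrow>
    right_tail (hd (v @ [c])) @ concat (map psi_letter v) = phi v @ right_tail c"
proof (induction v)
  case (Cons x v)
  then have "right_tail x @ psi_letter x = phi_letter x @ right_tail (hd (v @ [c]))"
    by (intro right_tail_conj_letter) (simp add: successively_Cons)
  then have "right_tail x @ psi_letter x @ concat (map psi_letter v)
      = phi_letter x @ right_tail (hd (v @ [c])) @ concat (map psi_letter v)"
    by (metis append_assoc)
  also have "\<dots> = phi_letter x @ phi v @ right_tail c"
    using Cons by (simp add: successively_Cons)
  finally show ?case by simp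
qed simp

lemma antimorph_append: "antimorph f (v @ w) = antimorph f w @ antimorph f v"
  by (simp add: antimorph_def)

lemma antimorph_phi: "antimorph f (phi v) = concat (map (\<lambda>x. antimorph f (phi_letter x)) (rev v))"
  by (induction v) (simp_all add: antimorph_def)

lemma antimorph_fixed_phi_right_tail:
  assumes psi: "\<And>x. x \<le> 3 \<Longrightarrow> antimorph f (phi_letter (f x)) = psi_letter x"
    and tail: "\<And>l c. allowed_pair l c \<Longrightarrow> antimorph f (right_tail c) = right_tail (f l)"
    and fixed: "antimorph f v = v" and "v \<noteq> []" and letters: "\<forall>a\<in>set v. a \<le> 3"
    and allowed: "successively allowed_pair (v @ [c])"
  shows "antimorph f (phi v @ right_tail c) = phi v @ right_tail c"
proof -
  have rev_v: "rev v = map f v" using fixed unfolding antimorph_def by (metis rev_swap)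
  have "allowed_pair (last v) c" using allowed \<open>v \<noteq> []\<close> by (simp add: successively_append_iff)
  moreover have "hd v = f (last v)"
    using \<open>v \<noteq> []\<close> arg_cong[OF fixed, of hd] by (simp add: antimorph_def hd_rev last_map)
  ultimately have tail_v: "antimorph f (right_tail c) = right_tail (hd (v @ [c]))"
    using tail \<open>v \<noteq> []\<close> by simp
  have "antimorph f (phi v) = concat (map (\<lambda>x. antimorph f (phi_letter (f x))) v)"
    by (simp add: antimorph_phi rev_v comp_def)
  also have "\<dots> = concat (map psi_letter v)"
    using letters psi by (metis (no_types, lifting) map_eq_conv)
  finally have "antimorph f (phi v @ right_tail c) = right_tail (hd (v @ [c])) @ concat (map psi_letter v)"
    using tail_v by (simp add: antimorph_append)
  also have "\<dots> = phi v @ right_tail c" using right_tail_conj[OF allowed] .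
  finally show ?thesis .
qed

lemma antimorph_theta_phi_letter:
  assumes "x \<le> 3"
  shows "antimorph theta1_letter (phi_letter (theta1_letter x)) = psi_letter x"
    and "antimorph theta2_letter (phi_letter (theta2_letter x)) = psi_letter x"
proof -
  from letter_cases[OF assms] consider "x = 0" | "x = 1" | "x = 2" | "x = 3" by blast
  then show "antimorph theta1_letter (phi_letter (theta1_letter x)) = psi_letter x"
    and "antimorph theta2_letter (phi_letter (theta2_letter x)) = psi_letter x"
    by (cases; simp add: antimorph_def theta1_letter_def theta2_letter_def psi_letter_def)+
qed

lemma antimorph_theta_right_tail:
  assumes "allowed_pair l c"
  shows "antimorph theta1_letter (right_tail c) = right_tail (theta1_letter l)"
    and "antimorph theta2_letter (right_tail c) = right_tail (theta2_letter l)"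
  using assms unfolding allowed_pair_def
  by (elim disjE conjE; simp add: antimorph_def theta1_letter_def theta2_letter_def right_tail_def)+

lemma theta_fixed_phi_right_tail:
  assumes "lang (v @ [c])" "v \<noteq> []" "theta1 v = v \<or> theta2 v = v"
  shows "theta1 (phi v @ right_tail c) = phi v @ right_tail c \<or> theta2 (phi v @ right_tail c) = phi v @ right_tail c"
proof -
  have letters: "\<forall>a\<in>set v. a \<le> 3" using lang_letter_le_3[OF assms(1)] by simp
  note allowed = lang_successively_allowed[OF assms(1)]
  from assms(3) show ?thesis
  proof
    assume "theta1 v = v"
    then have "antimorph theta1_letter (phi v @ right_tail c) = phi v @ right_tail c"
      using assms(2) letters allowed unfolding theta1_def
      by (intro antimorph_fixed_phi_right_tail) (simp_all add: antimorph_theta_phi_letter antimorph_theta_right_tail)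
    then show ?thesis by (simp add: theta1_def)
  next
    assume "theta2 v = v"
    then have "antimorph theta2_letter (phi v @ right_tail c) = phi v @ right_tail c"
      using assms(2) letters allowed unfolding theta2_def
      by (intro antimorph_fixed_phi_right_tail) (simp_all add: antimorph_theta_phi_letter antimorph_theta_right_tail)
    then show ?thesis by (simp add: theta2_def)
  qed
qed

lemma theta1_right_tail: "theta1 (right_tail c) = right_tail c"
  by (simp add: theta1_def antimorph_def theta1_letter_def right_tail_def)

theorem lang_bispecial_theta_fixed: "lang_bispecial w \<Longrightarrow> w \<noteq> [] \<Longrightarrow> theta1 w = w \<or> theta2 w = w"
proof (induction "length w" arbitrary: w rule: less_induct)
  case less
  show ?case
  proof (cases "length w \<le> 4")
    case True
    then show ?thesis using lang_bispecial_short less.prems by blast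
  next
    case False
    then obtain v c where w: "w = phi v @ right_tail c" and v: "lang_bispecial v" "lang (v @ [c])"
      using lang_bispecial_desubstitute less.prems(1) by fastforce
    show ?thesis
    proof (cases "v = []")
      case True
      then show ?thesis using w theta1_right_tail by simp
    next
      case False
      have "length v < length w" using w length_phi_ge[of v] False by (simp add: right_tail_def)
      then have "theta1 v = v \<or> theta2 v = v" using less.hyps v(1) False by blast
      then show ?thesis using theta_fixed_phi_right_tail v(2) False w by blast
    qed
  qed
qed

theorem corollary22:
  fixes u :: "nat \<Rightarrow> nat" and w :: "nat list"
  assumes "is_fixed_point_0 u"
    and "w \<noteq> []"
    and "bispecial w u"
  shows "theta1 w = w \<or> theta2 w = w"
proof -
  have "lang_bispecial w"
    using assms(3) factor_imp_lang[OF assms(1)]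
    unfolding bispecial_def left_special_def right_special_def lang_bispecial_def by blast
  then show ?thesis using lang_bispecial_theta_fixed assms(2) by blast
qed

end
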